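(* Let $m\ge 2$ be an even integer and $k$ an integer with $\gcd(k,m)=1$. Let $\alpha\in\mathbb{F}_{2^m}$ be nonzero and not a cube in $\mathbb{F}_{2^m}$, and let $i$ be an even nonnegative integer. Then the function $f:\mathbb{F}_{2^m}^2\to\mathbb{F}_{2^m}^2$ (identified additively with $\mathbb{F}_{2^{2m}}$) given by $$f(x,y)=\big(x^{2^k+1}+\alpha\, y^{(2^k+1)2^i},\ xy\big)$$ is APN.
   Context: A function $f$ on $\mathbb{F}_{2^{2m}}$ is almost perfect nonlinear (APN) if for every $a\neq 0$ and every $b$ the equation $f(x+a)-f(x)=b$ has at most two solutions. *)

theory Defs
  imports Main "HOL-Library.Product_Plus"
begin

definition APN :: "('b::{ab_group_add,finite} \<Rightarrow> 'b) \<Rightarrow> bool" where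
  "APN f \<longleftrightarrow> (\<forall>a b. a \<noteq> 0 \<longrightarrow> card {x. f (x + a) - f x = b} \<le> 2)"

definition is_cube :: "'a::monoid_mult \<Rightarrow> bool" where
  "is_cube a \<longleftrightarrow> (\<exists>z. a = z ^ 3)"

end

theory Submission
  imports Defs
begin

text \<open>In characteristic 2 the function is quadratic: its second difference
  \<open>f (x + z + a) - f (x + z) - (f (x + a) - f x)\<close> does not depend on \<open>x\<close>, so every equation
  \<open>f (x + a) - f x = b\<close> has at most the solutions \<open>x\<^sub>0\<close> and \<open>x\<^sub>0 + a\<close> once the second difference
  vanishes only for \<open>z = 0\<close> and \<open>z = a\<close>. With \<open>q = 2^k\<close>, the second component of the second
  difference forces \<open>z = t a\<close>, and then the first one becomes
  \<open>a\<^sub>1^(q+1) u + \<alpha> (a\<^sub>2^(q+1) u)^(2^i) = 0\<close> where \<open>u = t^q + t\<close>. If \<open>u = 0\<close>, then \<open>t\<close> is fixed by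
  the Frobenius powers \<open>2^k\<close> and \<open>2^m\<close>, hence by \<open>2^gcd k m = 2\<close>, so \<open>t \<in> {0, 1}\<close>. Otherwise,
  as \<open>m\<close> even forces \<open>k\<close> odd, \<open>3\<close> divides \<open>q + 1\<close> and \<open>2^i \<equiv> 1 (mod 3)\<close>, and the equation
  exhibits \<open>\<alpha>\<close> as a cube.\<close>

lemma char2_diff_eq_add:
  fixes x y :: "'a::ring_1"
  assumes "(2::'a) = 0"
  shows "x - y = x + y"
proof -
  have "y + y = 0" using assms by (metis mult_2 mult_zero_left)
  then show ?thesis by (metis add.assoc add.right_neutral diff_add_cancel)
qed

lemma char2_eq_iff_add_eq_0:
  fixes x y :: "'a::ring_1"
  assumes "(2::'a) = 0"
  shows "x + y = 0 \<longleftrightarrow> x = y"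
  using char2_diff_eq_add[OF assms] by (metis eq_iff_diff_eq_0)

lemma char2_power_two_power_add:
  fixes x y :: "'a::comm_ring_1"
  assumes "(2::'a) = 0"
  shows "(x + y) ^ 2 ^ n = x ^ 2 ^ n + y ^ 2 ^ n"
proof (induction n)
  case 0
  show ?case by simp
next
  case (Suc n)
  have square: "(u + v) ^ 2 = u ^ 2 + v ^ 2" for u v :: 'a
  proof -
    have "(u + v) ^ 2 = u ^ 2 + v ^ 2 + 2 * u * v" by (simp add: power2_eq_square algebra_simps)
    then show ?thesis using assms by simp
  qed
  have "(x + y) ^ 2 ^ Suc n = ((x + y) ^ 2 ^ n) ^ 2" by (simp only: power_Suc2 power_mult)
  also have "\<dots> = (x ^ 2 ^ n) ^ 2 + (y ^ 2 ^ n) ^ 2" by (simp add: Suc square)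
  also have "\<dots> = x ^ 2 ^ Suc n + y ^ 2 ^ Suc n" by (simp only: power_Suc2 power_mult)
  finally show ?case .
qed

lemma char2_power_two_power_diff:
  fixes x y :: "'a::comm_ring_1"
  assumes "(2::'a) = 0"
  shows "(x - y) ^ 2 ^ n = x ^ 2 ^ n - y ^ 2 ^ n"
  by (simp add: char2_diff_eq_add[OF assms] char2_power_two_power_add[OF assms])

lemma finite_field_power_card:
  fixes x :: "'a::{field,finite}"
  shows "x ^ card (UNIV :: 'a set) = x"
proof (cases "x = 0")
  case True
  then show ?thesis by (simp add: finite_UNIV_card_ge_0)
next
  case False
  let ?S = "UNIV - {0::'a}"
  have "bij_betw ((*) x) ?S ?S"
    by (rule bij_betw_byWitness[where f' = "(*) (inverse x)"]) (use False in auto)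
  then have "prod id ?S = prod ((*) x) ?S"
    using prod.reindex_bij_betw[of "(*) x" ?S ?S id] by simp
  also have "\<dots> = x ^ card ?S * prod id ?S"
    by (simp add: prod.distrib)
  finally have "prod id ?S = x ^ card ?S * prod id ?S" .
  moreover have "prod id ?S \<noteq> 0"
    by (simp add: prod_zero_iff)
  ultimately have unit: "x ^ card ?S = 1"
    by (metis mult_cancel_right2)
  have "card (UNIV :: 'a set) = Suc (card ?S)"
    using finite_UNIV_card_ge_0[where 'a = 'a] by (simp add: card_Diff_singleton)
  then have "x ^ card (UNIV :: 'a set) = x ^ card ?S * x" by (simp only: power_Suc2)
  then show ?thesis by (simp only: unit mult_1_left)
qed

lemma power_power_fixed_gcd:
  fixes t :: "'a::monoid_mult" and b :: nat
  assumes "t ^ b ^ k = t" and "t ^ b ^ m = t" and "k \<noteq> 0"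
  shows "t ^ b ^ gcd k m = t"
proof -
  have iter: "t ^ b ^ (n * j) = t" if "t ^ b ^ n = t" for n j
    by (induction j) (simp_all add: power_add power_mult that)
  obtain s r where bezout: "k * s = m * r + gcd k m" using bezout_nat[OF assms(3)] by blast
  have "t = t ^ b ^ (k * s)" using iter[OF assms(1)] by simp
  also have "\<dots> = (t ^ b ^ (m * r)) ^ b ^ gcd k m" by (simp only: bezout power_add power_mult)
  also have "\<dots> = t ^ b ^ gcd k m" using iter[OF assms(2)] by simp
  finally show ?thesis ..
qed

lemma frobenius_fixed_coprime:
  fixes t :: "'a::{field,finite}"
  assumes "card (UNIV :: 'a set) = 2 ^ m" and "coprime k m" and "k \<noteq> 0"
    and "t ^ 2 ^ k = t"
  shows "t = 0 \<or> t = 1"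
proof -
  have "t ^ 2 ^ gcd k m = t"
    using power_power_fixed_gcd[OF assms(4) _ assms(3)] finite_field_power_card[of t] assms(1)
    by simp
  then have "t * (t - 1) = 0" using assms(2) by (simp add: algebra_simps)
  then show ?thesis by simp
qed

lemma four_power_mod_three: "4 ^ j mod 3 = (1::nat)"
  by (induction j) (simp_all add: mod_mult_right_eq[symmetric])

lemma three_dvd_two_power_odd_plus_one:
  assumes "odd (k::nat)"
  shows "3 dvd 2 ^ k + (1::nat)"
proof -
  obtain j where k: "k = 2 * j + 1" using assms oddE by blast
  obtain e where e: "(4::nat) ^ j = 3 * e + 1"
    using four_power_mod_three[of j] by (metis div_mult_mod_eq mult.commute)
  have "(2::nat) ^ k = 2 * 4 ^ j" by (simp add: k power_mult)
  then have "2 ^ k + 1 = 3 * (2 * e + (1::nat))" using e by simp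
  then show ?thesis by (metis dvd_triv_left)
qed

lemma two_power_even_mod_three:
  assumes "even (i::nat)"
  shows "2 ^ i mod 3 = (1::nat)"
proof -
  obtain j where "i = 2 * j" using assms by blast
  then show ?thesis using four_power_mod_three[of j] by (simp add: power_mult)
qed

lemma is_cube_if_mult_power_eq:
  fixes \<alpha> a b u :: "'a::field"
  assumes "\<alpha> * (b ^ (3 * c) * u) ^ (3 * d + 1) = a ^ (3 * c) * u" and "b \<noteq> 0" and "u \<noteq> 0"
  shows "is_cube \<alpha>"
proof -
  define x where "x = b ^ (c * (3 * d + 1)) * u ^ d"
  have "(b ^ (3 * c) * u) ^ (3 * d + 1) = x ^ 3 * u"
    unfolding x_def by (simp add: power_mult_distrib power_add power_mult[symmetric] ac_simps)
  then have "\<alpha> * x ^ 3 * u = a ^ (3 * c) * u"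
    using assms(1) by (simp only: mult.assoc)
  also have "\<dots> = (a ^ c) ^ 3 * u" by (simp only: mult.commute[of 3 c] power_mult)
  finally have "\<alpha> * x ^ 3 * u = (a ^ c) ^ 3 * u" .
  then have "\<alpha> * x ^ 3 = (a ^ c) ^ 3" using assms(3) by simp
  moreover have "x \<noteq> 0" using assms(2,3) by (simp add: x_def)
  ultimately have "\<alpha> = (a ^ c / x) ^ 3" by (simp add: power_divide field_simps)
  then show ?thesis unfolding is_cube_def ..
qed

lemma proportional_if_cross_eq:
  fixes a1 a2 z1 z2 :: "'a::field"
  assumes "a1 \<noteq> 0 \<or> a2 \<noteq> 0" and "z1 * a2 = a1 * z2"
  obtains t where "z1 = t * a1" and "z2 = t * a2"
proof (cases "a1 = 0")
  case True
  then show ?thesis using assms by (intro that[of "z2 / a2"]) auto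
next
  case False
  then show ?thesis using assms(2) by (intro that[of "z1 / a1"]) (auto simp: field_simps)
qed

definition second_difference :: "('b::ab_group_add \<Rightarrow> 'c::ab_group_add) \<Rightarrow> 'b \<Rightarrow> 'b \<Rightarrow> 'b \<Rightarrow> 'c" where
  "second_difference f x z a = f (x + z + a) - f (x + z) - (f (x + a) - f x)"

lemma APN_if_second_difference:
  fixes f :: "'b::{ab_group_add,finite} \<Rightarrow> 'b" and D :: "'b \<Rightarrow> 'b \<Rightarrow> 'b"
  assumes second_difference: "\<And>x z a. second_difference f x z a = D z a"
    and kernel: "\<And>z a. a \<noteq> 0 \<Longrightarrow> D z a = 0 \<Longrightarrow> z = 0 \<or> z = a"
  shows "APN f"
  unfolding APN_def
proof (intro allI impI)
  fix a b :: 'b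
  assume "a \<noteq> 0"
  show "card {x. f (x + a) - f x = b} \<le> 2"
  proof (cases "\<exists>x\<^sub>0. f (x\<^sub>0 + a) - f x\<^sub>0 = b")
    case False
    then show ?thesis by simp
  next
    case True
    then obtain x\<^sub>0 where x\<^sub>0: "f (x\<^sub>0 + a) - f x\<^sub>0 = b" by blast
    have "{x. f (x + a) - f x = b} \<subseteq> {x\<^sub>0, x\<^sub>0 + a}"
    proof
      fix x
      assume "x \<in> {x. f (x + a) - f x = b}"
      then have "D (x - x\<^sub>0) a = 0"
        using second_difference[of x\<^sub>0 "x - x\<^sub>0" a] x\<^sub>0 by (simp add: second_difference_def)
      then have "x - x\<^sub>0 = 0 \<or> x - x\<^sub>0 = a" using kernel \<open>a \<noteq> 0\<close> by blast
      then show "x \<in> {x\<^sub>0, x\<^sub>0 + a}" by (auto simp: algebra_simps)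
    qed
    then have "card {x. f (x + a) - f x = b} \<le> card {x\<^sub>0, x\<^sub>0 + a}"
      by (intro card_mono) simp_all
    also have "\<dots> \<le> 2" by (simp add: card_insert_le_m1)
    finally show ?thesis .
  qed
qed

lemma second_difference_Pair:
  "second_difference (\<lambda>p. (g p, h p)) x z a = (second_difference g x z a, second_difference h x z a)"
  by (simp add: second_difference_def)

lemma second_difference_add_mult:
  fixes g h :: "'b::ab_group_add \<Rightarrow> 'a::comm_ring"
  shows "second_difference (\<lambda>p. g p + c * h p) x z a
    = second_difference g x z a + c * second_difference h x z a"
  by (simp add: second_difference_def algebra_simps)

lemma second_difference_comp_fst:
  "second_difference (\<lambda>p. g (fst p)) x z a = second_difference g (fst x) (fst z) (fst a)"
  by (simp add: second_difference_def)

lemma second_difference_comp_snd: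
  "second_difference (\<lambda>p. g (snd p)) x z a = second_difference g (snd x) (snd z) (snd a)"
  by (simp add: second_difference_def)

lemma second_difference_fst_mult_snd:
  fixes x z a :: "'a::comm_ring \<times> 'a"
  shows "second_difference (\<lambda>p. fst p * snd p) x z a = fst z * snd a + fst a * snd z"
  by (simp add: second_difference_def algebra_simps)

lemma char2_second_difference_power_two_power:
  fixes g :: "'b::ab_group_add \<Rightarrow> 'a::comm_ring_1"
  assumes "(2::'a) = 0"
  shows "second_difference (\<lambda>p. g p ^ 2 ^ n) x z a = second_difference g x z a ^ 2 ^ n"
  by (simp only: second_difference_def char2_power_two_power_diff[OF assms])

lemma char2_second_difference_power_two_power_plus_one:
  fixes x z a :: "'a::comm_ring_1"
  assumes "(2::'a) = 0"
  shows "second_difference (\<lambda>y. y ^ (2 ^ k + 1)) x z a = z ^ 2 ^ k * a + a ^ 2 ^ k * z"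
  unfolding second_difference_def
  by (simp only: power_add power_one_right char2_power_two_power_add[OF assms]) (simp add: algebra_simps)

lemma second_difference_kernel:
  fixes \<alpha> a1 a2 z1 z2 :: "'a::{field,finite}"
  assumes card: "card (UNIV :: 'a set) = 2 ^ m" and two: "(2::'a) = 0"
    and "coprime k m" and "odd k" and "\<not> is_cube \<alpha>" and "even i"
    and a: "a1 \<noteq> 0 \<or> a2 \<noteq> 0"
    and first: "z1 ^ 2 ^ k * a1 + a1 ^ 2 ^ k * z1 + \<alpha> * (z2 ^ 2 ^ k * a2 + a2 ^ 2 ^ k * z2) ^ 2 ^ i = 0"
    and second: "z1 * a2 + a1 * z2 = 0"
  shows "(z1 = 0 \<and> z2 = 0) \<or> (z1 = a1 \<and> z2 = a2)"
proof -
  have "z1 * a2 = a1 * z2" using second char2_eq_iff_add_eq_0[OF two] by blast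
  then obtain t where z1: "z1 = t * a1" and z2: "z2 = t * a2"
    using proportional_if_cross_eq[OF a] by blast
  define u where "u = t ^ 2 ^ k + t"
  have scaled: "(t * b) ^ 2 ^ k * b + b ^ 2 ^ k * (t * b) = b ^ (2 ^ k + 1) * u" for b
    unfolding u_def by (simp add: power_mult_distrib algebra_simps)
  have "a1 ^ (2 ^ k + 1) * u + \<alpha> * (a2 ^ (2 ^ k + 1) * u) ^ 2 ^ i = 0"
    using first unfolding z1 z2 scaled .
  then have eq: "\<alpha> * (a2 ^ (2 ^ k + 1) * u) ^ 2 ^ i = a1 ^ (2 ^ k + 1) * u"
    using char2_eq_iff_add_eq_0[OF two] by (simp add: add.commute)
  show ?thesis
  proof (cases "u = 0")
    case True
    then have "t ^ 2 ^ k = t" using two char2_eq_iff_add_eq_0 unfolding u_def by blast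
    moreover have "k \<noteq> 0" using odd_pos[OF \<open>odd k\<close>] by simp
    ultimately have "t = 0 \<or> t = 1" using frobenius_fixed_coprime[OF card \<open>coprime k m\<close>] by blast
    then show ?thesis using z1 z2 by auto
  next
    case False
    have "a2 \<noteq> 0"
    proof
      assume "a2 = 0"
      then have "a1 ^ (2 ^ k + 1) * u = 0" using eq by (simp add: power_0_left)
      then show False using a \<open>a2 = 0\<close> \<open>u \<noteq> 0\<close> by simp
    qed
    obtain c where c: "2 ^ k + 1 = 3 * (c::nat)" using three_dvd_two_power_odd_plus_one[OF \<open>odd k\<close>] by blast
    obtain d where d: "2 ^ i = 3 * d + (1::nat)"
      using two_power_even_mod_three[OF \<open>even i\<close>] by (metis div_mult_mod_eq mult.commute)
    have "is_cube \<alpha>"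
      using is_cube_if_mult_power_eq[OF _ \<open>a2 \<noteq> 0\<close> \<open>u \<noteq> 0\<close>] eq unfolding c d by blast
    then show ?thesis using \<open>\<not> is_cube \<alpha>\<close> by contradiction
  qed
qed

theorem corollary4:
  fixes \<alpha> :: "'a::{field,finite}" and m k i :: nat
  assumes "card (UNIV :: 'a set) = 2 ^ m" and "(2::'a) = 0"
    and "m \<ge> 2" and "even m" and "coprime k m"
    and "\<alpha> \<noteq> 0" and "\<not> is_cube \<alpha>"
    and "even i"
  shows "APN (\<lambda>(x, y). (x ^ (2 ^ k + 1) + \<alpha> * y ^ ((2 ^ k + 1) * 2 ^ i), x * y))"
proof -
  let ?f = "\<lambda>(x, y). (x ^ (2 ^ k + 1) + \<alpha> * y ^ ((2 ^ k + 1) * 2 ^ i), x * y)"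
  let ?P = "\<lambda>y::'a. y ^ (2 ^ k + 1)"
  define B where "B z a = z ^ 2 ^ k * a + a ^ 2 ^ k * z" for z a :: 'a
  define D where "D z a = (B (fst z) (fst a) + \<alpha> * B (snd z) (snd a) ^ 2 ^ i,
    fst z * snd a + fst a * snd z)" for z a :: "'a \<times> 'a"
  have f: "?f = (\<lambda>p. (?P (fst p) + \<alpha> * ?P (snd p) ^ 2 ^ i, fst p * snd p))"
    by (simp only: split_def power_mult)
  have "second_difference ?f x z a = D z a" for x z a
    unfolding f second_difference_Pair second_difference_add_mult second_difference_fst_mult_snd
      char2_second_difference_power_two_power[OF assms(2)]
      second_difference_comp_fst[of ?P] second_difference_comp_snd[of ?P]
      char2_second_difference_power_two_power_plus_one[OF assms(2)]
    by (simp add: D_def B_def)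
  moreover have "z = 0 \<or> z = a" if "a \<noteq> 0" and "D z a = 0" for z a
  proof -
    have "odd k" using \<open>even m\<close> \<open>coprime k m\<close> by auto
    then show ?thesis
      using that second_difference_kernel[OF assms(1,2,5) _ assms(7,8), of "fst a" "snd a" "fst z" "snd z"]
      by (auto simp: D_def B_def zero_prod_def prod_eq_iff)
  qed
  ultimately show ?thesis by (rule APN_if_second_difference)
qed

end
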